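(* Let $b$ be a $\kappa$--contracting geodesic ray in a proper CAT(0) space $X$, and let $m_b$ be the function provided by the Strongly Morse theorem applied to $Z=b$. Then for every $(q,Q)$--quasi-geodesic ray $\beta$ that $\kappa$--fellow travels $b$, we have $\beta\subset\mathcal N_\kappa(b,m_b(q,Q))$ and $b\subset\mathcal N_\kappa(\beta,2m_b(q,Q))$.
   Context: $\|x\|=d_X(\mathfrak o,x)$; $\kappa:[0,\infty)\to[1,\infty)$ monotone increasing, concave, sublinear; $\kappa(x):=\kappa(\|x\|)$; $\mathcal N_\kappa(Z,n)=\{x:d_X(x,Z)\le n\kappa(x)\}$. Quasi-geodesic rays are continuous quasi-isometric embeddings of $[0,\infty)$ starting at $\mathfrak o$; two rays $\kappa$--fellow travel if each lies in some $(\kappa,n)$--neighbourhood of the other. $Z$ is $\kappa$--contracting if there is $c_Z$ with $\operatorname{diam}(x_Z\cup y_Z)\le c_Z\kappa(x)$ whenever $d_X(x,y)\le d_X(x,Z)$. The Strongly Morse theorem: for a closed $\kappa$--contracting $Z\ni\mathfrak o$ there is $m_Z:\mathbb R^2\to\mathbb R$ such that for all $r,n>0$ and sublinear $\kappa'$ there is $R>0$ so that for every $(q,Q)$--quasi-geodesic ray $\eta$ with $m_Z(q,Q)\le r/(2\kappa(r))$, if $t_r,t_R$ are the first times with $\|\eta(t_r)\|=r$, $\|\eta(t_R)\|=R$ and $d_X(\eta(t_R),Z)\le n\kappa'(R)$, then $\eta([0,t_r])\subset\mathcal N_\kappa(Z,m_Z(q,Q))$. *)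

theory Defs
  imports "HOL-Analysis.Analysis"
begin

definition geodesic_segment :: "(real \<Rightarrow> 'a::metric_space) \<Rightarrow> 'a \<Rightarrow> 'a \<Rightarrow> bool" where
  "geodesic_segment g a b \<longleftrightarrow> g 0 = a \<and> g (dist a b) = b \<and>
     (\<forall>s\<in>{0..dist a b}. \<forall>t\<in>{0..dist a b}. dist (g s) (g t) = \<bar>s - t\<bar>)"

definition geodesic_space :: "'a::metric_space itself \<Rightarrow> bool" where
  "geodesic_space _ \<longleftrightarrow> (\<forall>a b::'a. \<exists>g. geodesic_segment g a b)"

definition proper_space :: "'a::metric_space itself \<Rightarrow> bool" where
  "proper_space _ \<longleftrightarrow> (\<forall>(x::'a) r. compact (cball x r))"

text \<open>Comparison point in the Euclidean plane (modelled as \<open>\<complex>\<close>) on the segment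
  from a' to b' of length L, at distance s from a'.\<close>
definition cmp_point :: "complex \<Rightarrow> complex \<Rightarrow> real \<Rightarrow> real \<Rightarrow> complex" where
  "cmp_point a' b' L s = a' + complex_of_real (s / L) * (b' - a')"

text \<open>CAT(0) inequality (Bridson--Haefliger): for every geodesic triangle with sides
  g1 (x to y), g2 (y to z), g3 (z to x) and every comparison triangle x', y', z'
  in the Euclidean plane, distances between points of the triangle are at most the
  distances between the corresponding comparison points.\<close>
definition CAT0 :: "'a::metric_space itself \<Rightarrow> bool" where
  "CAT0 T \<longleftrightarrow> geodesic_space T \<and>
    (\<forall>(x::'a) y z g1 g2 g3 x' y' z'.
       geodesic_segment g1 x y \<and> geodesic_segment g2 y z \<and> geodesic_segment g3 z x \<and>
       dist x' y' = dist x y \<and> dist y' z' = dist y z \<and> dist z' x' = dist z x \<longrightarrow>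
       (let sides = [(g1, x', y', dist x y), (g2, y', z', dist y z), (g3, z', x', dist z x)] in
        \<forall>(g, a', b', L) \<in> set sides. \<forall>(h, c', d', M) \<in> set sides.
          \<forall>s\<in>{0..L}. \<forall>t\<in>{0..M}.
            dist (g s) (h t) \<le> dist (cmp_point a' b' L s) (cmp_point c' d' M t)))"

definition sublinear_fn :: "(real \<Rightarrow> real) \<Rightarrow> bool" where
  "sublinear_fn k \<longleftrightarrow> (\<forall>t\<ge>0. k t \<ge> 1) \<and> mono_on {0..} k \<and> concave_on {0..} k \<and>
     ((\<lambda>t. k t / t) \<longlongrightarrow> 0) at_top"

text \<open>\<open>\<kappa>(x) = \<kappa>(\<parallel>x\<parallel>)\<close> with \<open>\<parallel>x\<parallel> = d(bp,x)\<close>;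
  \<open>\<N>_\<kappa>(Z,n) = {x. d(x,Z) \<le> n \<kappa>(x)}\<close>.\<close>
definition kappa_nbhd :: "'a::metric_space \<Rightarrow> (real \<Rightarrow> real) \<Rightarrow> 'a set \<Rightarrow> real \<Rightarrow> 'a set" where
  "kappa_nbhd bp k Z n = {x. infdist x Z \<le> n * k (dist bp x)}"

definition geodesic_ray :: "'a::metric_space \<Rightarrow> (real \<Rightarrow> 'a) \<Rightarrow> bool" where
  "geodesic_ray bp b \<longleftrightarrow> b 0 = bp \<and> (\<forall>s\<ge>0. \<forall>t\<ge>0. dist (b s) (b t) = \<bar>s - t\<bar>)"

definition quasi_geodesic_ray :: "'a::metric_space \<Rightarrow> real \<Rightarrow> real \<Rightarrow> (real \<Rightarrow> 'a) \<Rightarrow> bool" where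
  "quasi_geodesic_ray bp q Q e \<longleftrightarrow> q \<ge> 1 \<and> Q \<ge> 0 \<and> e 0 = bp \<and> continuous_on {0..} e \<and>
     (\<forall>s\<ge>0. \<forall>t\<ge>0. \<bar>s - t\<bar> / q - Q \<le> dist (e s) (e t) \<and> dist (e s) (e t) \<le> q * \<bar>s - t\<bar> + Q)"

definition kappa_fellow_travel :: "'a::metric_space \<Rightarrow> (real \<Rightarrow> real) \<Rightarrow> (real \<Rightarrow> 'a) \<Rightarrow> (real \<Rightarrow> 'a) \<Rightarrow> bool" where
  "kappa_fellow_travel bp k e b \<longleftrightarrow>
     (\<exists>n. e ` {0..} \<subseteq> kappa_nbhd bp k (b ` {0..}) n) \<and> (\<exists>n. b ` {0..} \<subseteq> kappa_nbhd bp k (e ` {0..}) n)"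

definition nearest_proj :: "'a::metric_space set \<Rightarrow> 'a \<Rightarrow> 'a set" where
  "nearest_proj Z x = {z\<in>Z. dist x z = infdist x Z}"

definition kappa_contracting :: "'a::metric_space \<Rightarrow> (real \<Rightarrow> real) \<Rightarrow> 'a set \<Rightarrow> bool" where
  "kappa_contracting bp k Z \<longleftrightarrow> (\<exists>c. \<forall>x y. dist x y \<le> infdist x Z \<longrightarrow>
      diameter (nearest_proj Z x \<union> nearest_proj Z y) \<le> c * k (dist bp x))"

definition first_time :: "'a::metric_space \<Rightarrow> (real \<Rightarrow> 'a) \<Rightarrow> real \<Rightarrow> real \<Rightarrow> bool" where
  "first_time bp e r t \<longleftrightarrow> t \<ge> 0 \<and> dist bp (e t) = r \<and> (\<forall>s\<in>{0..<t}. dist bp (e s) \<noteq> r)"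

text \<open>The conclusion of the Strongly Morse theorem for Z with function m.\<close>
definition strongly_morse_fn :: "'a::metric_space \<Rightarrow> (real \<Rightarrow> real) \<Rightarrow> 'a set \<Rightarrow> (real \<Rightarrow> real \<Rightarrow> real) \<Rightarrow> bool" where
  "strongly_morse_fn bp k Z m \<longleftrightarrow>
    (\<forall>r>0. \<forall>n>0. \<forall>k'. sublinear_fn k' \<longrightarrow>
      (\<exists>R>0. \<forall>e q Q. quasi_geodesic_ray bp q Q e \<and> m q Q \<le> r / (2 * k r) \<longrightarrow>
         (\<forall>tr tR. first_time bp e r tr \<and> first_time bp e R tR \<and> infdist (e tR) Z \<le> n * k' R \<longrightarrow>
            e ` {0..tr} \<subseteq> kappa_nbhd bp k Z (m q Q))))"

end

theory Submission
  imports Defs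
begin

text \<open>
  By fellow travelling, \<open>\<beta>\<close> stays in some \<open>\<N>_\<kappa>(b, n\<^sub>0)\<close>, which supplies the far-point
  hypothesis of the Strongly Morse theorem at every radius. Choosing \<open>r\<close> so large that
  \<open>m_b(q,Q) \<le> r/(2\<kappa>(r))\<close> and that \<open>\<beta>\<close> cannot reach norm \<open>r\<close> before a given time shows
  \<open>\<beta> \<subseteq> \<N>_\<kappa>(b, m)\<close>, \<open>m = m_b(q,Q)\<close>.

  Conversely, for \<open>b(s)\<close> continuity gives a point \<open>\<beta>(t)\<close> equally close to \<open>b[0,s]\<close> and
  \<open>b[s,\<infinity>)\<close>, hence within \<open>m \<kappa>(\<beta>(t))\<close> of both; convexity of the distance function in a
  CAT(0) space puts \<open>b(s)\<close> within the same bound of \<open>\<beta>(t)\<close>. Thus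
  \<open>\<parallel>\<beta>(t)\<parallel> \<le> s + m \<kappa>(\<beta>(t))\<close>, and concavity of \<open>\<kappa>\<close> turns this into \<open>\<kappa>(\<beta>(t)) \<le> 2\<kappa>(s)\<close>
  unless \<open>s \<le> 2m\<kappa>(s)\<close>, in which case \<open>\<beta>(0) = b(0)\<close> is close enough.
\<close>

lemma CAT0_comparison:
  fixes x y z :: "'a::metric_space"
  assumes "CAT0 TYPE('a)"
    and "geodesic_segment g1 x y" "geodesic_segment g2 y z" "geodesic_segment g3 z x"
    and "dist x' y' = dist x y" "dist y' z' = dist y z" "dist z' x' = dist z x"
    and "s \<in> {0..dist x y}" "t \<in> {0..dist y z}"
  shows "dist (g1 s) (g2 t) \<le> dist (cmp_point x' y' (dist x y) s) (cmp_point y' z' (dist y z) t)"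
  using assms(1)[unfolded CAT0_def, THEN conjunct2, rule_format, of g1 x y g2 z g3 x' y' z'] assms(2-9)
  by (simp add: Let_def)

lemma complex_triangle_exists:
  assumes "0 \<le> A" "A \<le> L + C" "C \<le> L + A" "L \<le> A + C"
  obtains z where "cmod z = A" "cmod (complex_of_real L - z) = C"
proof -
  define \<phi> where "\<phi> = (\<lambda>\<theta>. cmod (complex_of_real L - complex_of_real A * cis \<theta>))"
  have "\<phi> 0 = \<bar>L - A\<bar>"
    by (simp add: \<phi>_def flip: of_real_diff)
  moreover have "\<phi> pi = \<bar>L + A\<bar>"
    by (simp add: \<phi>_def flip: of_real_add)
  moreover have "continuous_on {0..pi} \<phi>"
    unfolding \<phi>_def by (intro continuous_intros)
  ultimately obtain \<theta> where "\<phi> \<theta> = C"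
    using IVT'[of \<phi> 0 C pi] assms by force
  then show thesis
    using that[of "complex_of_real A * cis \<theta>"] assms(1) by (simp add: \<phi>_def norm_mult)
qed

lemma norm_of_real_segment_le_max:
  assumes "0 \<le> v" "v \<le> L"
  shows "cmod (complex_of_real v - z) \<le> max (cmod z) (cmod (complex_of_real L - z))"
proof (cases "L = 0")
  case True
  then show ?thesis using assms by (simp add: norm_minus_commute)
next
  case False
  define \<mu> where "\<mu> = v / L"
  have \<mu>: "0 \<le> \<mu>" "\<mu> \<le> 1" using assms False by (auto simp: \<mu>_def)
  have "complex_of_real v - z = complex_of_real (1 - \<mu>) * (- z) + complex_of_real \<mu> * (complex_of_real L - z)"
  proof -
    have "complex_of_real \<mu> * complex_of_real L = complex_of_real v"
      using False unfolding \<mu>_def of_real_mult[symmetric] by simp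
    then show ?thesis by (simp add: algebra_simps)
  qed
  then have "cmod (complex_of_real v - z) \<le>
      cmod (complex_of_real (1 - \<mu>) * (- z)) + cmod (complex_of_real \<mu> * (complex_of_real L - z))"
    by (metis norm_triangle_ineq)
  also have "\<dots> = (1 - \<mu>) * cmod z + \<mu> * cmod (complex_of_real L - z)"
    using \<mu> by (simp add: norm_mult del: of_real_diff)
  also have "\<dots> \<le> (1 - \<mu>) * max (cmod z) (cmod (complex_of_real L - z)) + \<mu> * max (cmod z) (cmod (complex_of_real L - z))"
    using \<mu> by (intro add_mono mult_left_mono) auto
  finally show ?thesis by (simp add: algebra_simps)
qed

lemma CAT0_dist_geodesic_segment_le_max:
  fixes p :: "'a::metric_space"
  assumes cat: "CAT0 TYPE('a)" and g: "geodesic_segment g a c" and s: "s \<in> {0..dist a c}"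
  shows "dist (g s) p \<le> max (dist a p) (dist c p)"
proof (cases "dist a c = 0")
  case True
  then show ?thesis using g s by (simp add: geodesic_segment_def)
next
  case False
  define L A C where "L = dist a c" and "A = dist p a" and "C = dist c p"
  have "geodesic_space TYPE('a)" using cat by (simp add: CAT0_def)
  then obtain g2 g3 where g2: "geodesic_segment g2 c p" and g3: "geodesic_segment g3 p a"
    unfolding geodesic_space_def by blast
  have "A \<le> L + C" "C \<le> L + A" "L \<le> A + C"
    unfolding L_def A_def C_def
    using dist_triangle[of p a c] dist_triangle[of c p a] dist_triangle[of a c p]
    by (simp_all add: dist_commute)
  then obtain z where z: "cmod z = A" "cmod (complex_of_real L - z) = C"
    using complex_triangle_exists[of A L C] by (auto simp: A_def)
  \<comment> \<open>In the comparison triangle \<open>0, L, z\<close> the point \<open>g s\<close> corresponds to \<open>s\<close> and \<open>p = g2 C\<close> to \<open>z\<close>.\<close>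
  have "dist (g s) (g2 C) \<le> dist (cmp_point 0 (complex_of_real L) L s) (cmp_point (complex_of_real L) z C C)"
    using CAT0_comparison[OF cat g g2 g3, of 0 "complex_of_real L" z s C] s z
    by (simp add: L_def A_def C_def dist_norm norm_minus_commute)
  also have "cmp_point 0 (complex_of_real L) L s = complex_of_real s"
    using False by (simp add: cmp_point_def L_def del: of_real_divide flip: of_real_mult)
  also have "cmp_point (complex_of_real L) z C C = z"
    using z(2) by (cases "C = 0") (simp_all add: cmp_point_def)
  also have "dist (complex_of_real s) z \<le> max A C"
    using norm_of_real_segment_le_max[of s L z] s z by (simp add: dist_norm L_def)
  finally show ?thesis
    using g2 by (simp add: geodesic_segment_def A_def C_def dist_commute)
qed

lemma geodesic_ray_dist:
  assumes "geodesic_ray bp b" "s \<ge> 0"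
  shows "dist bp (b s) = s"
proof -
  have "b 0 = bp" "dist (b 0) (b s) = \<bar>0 - s\<bar>"
    using assms by (auto simp: geodesic_ray_def)
  then show ?thesis using assms(2) by simp
qed

lemma CAT0_dist_geodesic_ray_le_max:
  fixes p :: "'a::metric_space"
  assumes cat: "CAT0 TYPE('a)" and b: "geodesic_ray bp b" and u: "0 \<le> u1" "u1 \<le> s" "s \<le> u2"
  shows "dist (b s) p \<le> max (dist (b u1) p) (dist (b u2) p)"
proof -
  have iso: "dist (b v) (b w) = \<bar>v - w\<bar>" if "v \<ge> 0" "w \<ge> 0" for v w
    using b that by (simp add: geodesic_ray_def)
  then have "dist (b u1) (b u2) = u2 - u1" using u by simp
  then have "geodesic_segment (\<lambda>v. b (u1 + v)) (b u1) (b u2)"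
    using u iso by (auto simp: geodesic_segment_def)
  from CAT0_dist_geodesic_segment_le_max[OF cat this, of "s - u1" p]
  show ?thesis using \<open>dist (b u1) (b u2) = u2 - u1\<close> u by simp
qed

lemma infdist_less_imp_ex_dist_less:
  assumes "A \<noteq> {}" "infdist x A < d"
  obtains a where "a \<in> A" "dist x a < d"
proof -
  have "bdd_below ((\<lambda>a. dist x a) ` A)" by (rule bdd_belowI[of _ 0]) auto
  then show thesis using assms that by (auto simp: infdist_notempty cINF_less_iff)
qed

lemma CAT0_dist_geodesic_ray_le_infdist:
  fixes p :: "'a::metric_space"
  assumes cat: "CAT0 TYPE('a)" and b: "geodesic_ray bp b" and "s \<ge> 0"
    and before: "infdist p (b ` {0..s}) \<le> D" and after: "infdist p (b ` {s..}) \<le> D"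
  shows "dist (b s) p \<le> D"
proof (rule field_le_epsilon)
  fix \<epsilon> :: real assume "\<epsilon> > 0"
  have "b ` {0..s} \<noteq> {}" "infdist p (b ` {0..s}) < D + \<epsilon>"
    using before \<open>\<epsilon> > 0\<close> \<open>s \<ge> 0\<close> by auto
  then obtain a1 where "a1 \<in> b ` {0..s}" "dist p a1 < D + \<epsilon>"
    by (rule infdist_less_imp_ex_dist_less)
  then obtain u1 where u1: "u1 \<in> {0..s}" "dist p (b u1) < D + \<epsilon>" by blast
  have "b ` {s..} \<noteq> {}" "infdist p (b ` {s..}) < D + \<epsilon>"
    using after \<open>\<epsilon> > 0\<close> by auto
  then obtain a2 where "a2 \<in> b ` {s..}" "dist p a2 < D + \<epsilon>"
    by (rule infdist_less_imp_ex_dist_less)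
  then obtain u2 where u2: "u2 \<in> {s..}" "dist p (b u2) < D + \<epsilon>" by blast
  have "dist (b s) p \<le> max (dist (b u1) p) (dist (b u2) p)"
    using CAT0_dist_geodesic_ray_le_max[OF cat b] u1 u2 by auto
  then show "dist (b s) p \<le> D + \<epsilon>"
    using u1 u2 by (simp add: dist_commute)
qed

lemma sublinear_fn_ge_one: "sublinear_fn k \<Longrightarrow> t \<ge> 0 \<Longrightarrow> 1 \<le> k t"
  by (simp add: sublinear_fn_def)

lemma sublinear_fn_scaled_le:
  assumes k: "sublinear_fn k" and "0 < s" "s \<le> x"
  shows "s * k x \<le> x * k s"
proof -
  define v where "v = s / x"
  have v: "0 \<le> v" "v \<le> 1" "v * x = s" using assms by (auto simp: v_def)
  have "concave_on {0..} k" using k by (simp add: sublinear_fn_def)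
  from concave_onD[OF this, of v 0 x] v assms
  have "(1 - v) * k 0 + v * k x \<le> k s" by simp
  moreover have "0 \<le> (1 - v) * k 0" using v sublinear_fn_ge_one[OF k, of 0] by simp
  ultimately have "x * (v * k x) \<le> x * k s"
    using assms by (intro mult_left_mono) auto
  then show ?thesis using v(3) by (metis mult.assoc mult.commute)
qed

lemma sublinear_fn_eventually_dominated:
  assumes "sublinear_fn k" "c \<ge> 0"
  obtains r where "r > B" "c * k r + B < r"
proof -
  have "((\<lambda>t. k t / t) \<longlongrightarrow> 0) at_top" using assms(1) by (simp add: sublinear_fn_def)
  then have "\<forall>\<^sub>F t in at_top. k t / t < 1 / (c + 1)"
    using assms(2) by (intro order_tendstoD(2)) auto
  moreover have "\<forall>\<^sub>F t in at_top. (\<bar>B\<bar> + 1) * (c + 1) < t" by (rule eventually_gt_at_top)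
  ultimately have "\<forall>\<^sub>F t in at_top. k t / t < 1 / (c + 1) \<and> (\<bar>B\<bar> + 1) * (c + 1) < t"
    by (rule eventually_conj)
  then obtain N where "\<forall>t\<ge>N. k t / t < 1 / (c + 1) \<and> (\<bar>B\<bar> + 1) * (c + 1) < t"
    by (auto simp: eventually_at_top_linorder)
  then obtain r where r: "k r / r < 1 / (c + 1)" "(\<bar>B\<bar> + 1) * (c + 1) < r" by blast
  have "0 \<le> (\<bar>B\<bar> + 1) * (c + 1)" using assms(2) by simp
  then have "r > 0" using r(2) by linarith
  have "\<bar>B\<bar> + 1 < r / (c + 1)"
    using r(2) assms(2) by (simp add: field_simps)
  then have "B < r / (c + 1)" using abs_ge_self[of B] by linarith
  moreover have "c * k r \<le> c * (r / (c + 1))"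
    using r(1) \<open>r > 0\<close> assms(2) by (intro mult_left_mono) (auto simp: field_simps)
  moreover have "c * (r / (c + 1)) + r / (c + 1) = (c + 1) * (r / (c + 1))"
    by (simp add: distrib_right add_divide_distrib)
  moreover have "(c + 1) * (r / (c + 1)) = r"
    using assms(2) by simp
  ultimately have "c * k r + B < r" by linarith
  moreover have "0 \<le> c * k r"
    using assms sublinear_fn_ge_one[of k r] \<open>r > 0\<close> by simp
  ultimately show thesis using that[of r] by linarith
qed

lemma sublinear_fn_implicit_bound:
  assumes k: "sublinear_fn k" and "M \<ge> 0" "s > 0" "x \<ge> 0"
    and small: "2 * M * k s < s" and implicit: "x \<le> s + M * k x"
  shows "k x \<le> 2 * k s"
proof (cases "x \<le> s")
  case True
  then have "k x \<le> k s"
    using k assms(3,4) by (intro mono_onD[of "{0..}" k]) (auto simp: sublinear_fn_def)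
  then show ?thesis using sublinear_fn_ge_one[OF k, of s] assms(3) by linarith
next
  case False
  have "s * k x \<le> x * k s" using sublinear_fn_scaled_le[OF k] assms(3) False by simp
  also have "\<dots> \<le> (s + M * k x) * k s"
    using implicit sublinear_fn_ge_one[OF k, of s] assms(3) by (intro mult_right_mono) auto
  also have "\<dots> = s * k s + (M * k s) * k x" by (simp add: algebra_simps)
  also have "\<dots> \<le> s * k s + (s / 2) * k x"
    using small sublinear_fn_ge_one[OF k, of x] assms(4) by (intro add_left_mono mult_right_mono) auto
  finally have "s * k x \<le> s * (2 * k s)" by linarith
  then show ?thesis using assms(3) by simp
qed

lemma quasi_geodesic_ray_continuous_dist:
  "quasi_geodesic_ray bp q Q e \<Longrightarrow> continuous_on {0..} (\<lambda>t. dist bp (e t))"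
  unfolding quasi_geodesic_ray_def by (intro continuous_intros) auto

lemma quasi_geodesic_ray_norm_bounds:
  assumes "quasi_geodesic_ray bp q Q e" "t \<ge> 0"
  shows "t / q - Q \<le> dist bp (e t)" "dist bp (e t) \<le> q * t + Q"
proof -
  have "e 0 = bp" and qi: "\<forall>s\<ge>0. \<forall>t\<ge>0. \<bar>s - t\<bar> / q - Q \<le> dist (e s) (e t) \<and> dist (e s) (e t) \<le> q * \<bar>s - t\<bar> + Q"
    using assms(1) by (auto simp: quasi_geodesic_ray_def)
  from qi[rule_format, of 0 t] \<open>e 0 = bp\<close> assms(2)
  show "t / q - Q \<le> dist bp (e t)" "dist bp (e t) \<le> q * t + Q" by auto
qed

lemma quasi_geodesic_ray_reaches:
  assumes e: "quasi_geodesic_ray bp q Q e" and "\<rho> \<ge> 0"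
  obtains t where "t \<ge> 0" "dist bp (e t) = \<rho>"
proof -
  have q: "q \<ge> 1" "Q \<ge> 0" "e 0 = bp" using e by (auto simp: quasi_geodesic_ray_def)
  define T where "T = q * (\<rho> + Q)"
  have "T \<ge> 0" "T / q - Q = \<rho>" using q \<open>\<rho> \<ge> 0\<close> by (auto simp: T_def)
  then have "\<rho> \<le> dist bp (e T)" using quasi_geodesic_ray_norm_bounds(1)[OF e, of T] by simp
  moreover have "continuous_on {0..T} (\<lambda>t. dist bp (e t))"
    using quasi_geodesic_ray_continuous_dist[OF e] by (rule continuous_on_subset) auto
  ultimately show thesis
    using IVT'[of "\<lambda>t. dist bp (e t)" 0 \<rho> T] that q(3) \<open>T \<ge> 0\<close> \<open>\<rho> \<ge> 0\<close> by auto
qed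

lemma quasi_geodesic_ray_first_time:
  assumes e: "quasi_geodesic_ray bp q Q e" and "\<rho> \<ge> 0"
  obtains t where "first_time bp e \<rho> t"
proof -
  define S where "S = {0..} \<inter> (\<lambda>t. dist bp (e t)) -` {\<rho>}"
  have "closed S" unfolding S_def
    by (rule continuous_closed_preimage[OF quasi_geodesic_ray_continuous_dist[OF e]]) auto
  moreover have "S \<noteq> {}" using quasi_geodesic_ray_reaches[OF assms] by (auto simp: S_def)
  moreover have "bdd_below S" by (rule bdd_belowI[of _ 0]) (auto simp: S_def)
  ultimately have "Inf S \<in> S" by (rule closed_contains_Inf[rotated 2])
  moreover have "dist bp (e s) \<noteq> \<rho>" if "s \<in> {0..<Inf S}" for s
    using that cInf_lower[OF _ \<open>bdd_below S\<close>, of s] by (auto simp: S_def)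
  ultimately show thesis using that[of "Inf S"] by (auto simp: first_time_def S_def)
qed

lemma strongly_morse_fn_nbhd_subset:
  assumes k: "sublinear_fn k" and morse: "strongly_morse_fn bp k Z m"
    and e: "quasi_geodesic_ray bp q Q e" and near: "e ` {0..} \<subseteq> kappa_nbhd bp k Z n0"
  shows "e ` {0..} \<subseteq> kappa_nbhd bp k Z (m q Q)"
proof clarify
  fix t0 :: real assume "t0 \<ge> 0"
  have q: "q \<ge> 1" "Q \<ge> 0" using e by (auto simp: quasi_geodesic_ray_def)
  obtain r where r: "r > q * t0 + Q" "\<bar>2 * m q Q\<bar> * k r + (q * t0 + Q) < r"
    using sublinear_fn_eventually_dominated[OF k, of "\<bar>2 * m q Q\<bar>"] by auto
  have "q * t0 + Q \<ge> 0" using q \<open>t0 \<ge> 0\<close> by simp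
  then have "r > 0" using r(1) by linarith
  have "2 * m q Q * k r \<le> \<bar>2 * m q Q\<bar> * k r"
    using sublinear_fn_ge_one[OF k, of r] \<open>r > 0\<close> by (intro mult_right_mono) auto
  then have "2 * m q Q * k r < r" using r(2) \<open>q * t0 + Q \<ge> 0\<close> by linarith
  then have "m q Q \<le> r / (2 * k r)"
    using sublinear_fn_ge_one[OF k, of r] \<open>r > 0\<close> by (simp add: field_simps)
  have "max n0 1 > 0" by simp
  from morse[unfolded strongly_morse_fn_def, rule_format, OF \<open>r > 0\<close> this k]
  obtain R where "R > 0" and tracking: "\<forall>e q Q. quasi_geodesic_ray bp q Q e \<and> m q Q \<le> r / (2 * k r) \<longrightarrow>
      (\<forall>tr tR. first_time bp e r tr \<and> first_time bp e R tR \<and> infdist (e tR) Z \<le> max n0 1 * k R \<longrightarrow>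
        e ` {0..tr} \<subseteq> kappa_nbhd bp k Z (m q Q))"
    by blast
  obtain tr where tr: "first_time bp e r tr"
    using quasi_geodesic_ray_first_time[OF e, of r] \<open>r > 0\<close> by auto
  obtain tR where tR: "first_time bp e R tR"
    using quasi_geodesic_ray_first_time[OF e, of R] \<open>R > 0\<close> by auto
  have "infdist (e tR) Z \<le> n0 * k R"
    using near tR by (auto simp: first_time_def kappa_nbhd_def)
  also have "\<dots> \<le> max n0 1 * k R"
    using sublinear_fn_ge_one[OF k, of R] \<open>R > 0\<close> by (intro mult_right_mono) auto
  finally have "e ` {0..tr} \<subseteq> kappa_nbhd bp k Z (m q Q)"
    using tracking e \<open>m q Q \<le> r / (2 * k r)\<close> tr tR by blast
  moreover have "t0 \<le> tr"
  proof (rule ccontr)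
    assume "\<not> t0 \<le> tr"
    then have "q * tr + Q \<le> q * t0 + Q" using q by simp
    moreover have "r \<le> q * tr + Q"
      using tr quasi_geodesic_ray_norm_bounds(2)[OF e, of tr] by (simp add: first_time_def)
    ultimately show False using r(1) by linarith
  qed
  ultimately show "e t0 \<in> kappa_nbhd bp k Z (m q Q)" using \<open>t0 \<ge> 0\<close> by auto
qed

lemma infdist_image_atLeast_split:
  assumes "s \<ge> (0::real)"
  shows "infdist x (f ` {0..}) = min (infdist x (f ` {0..s})) (infdist x (f ` {s..}))"
proof -
  have "{0..} = {0..s} \<union> {s..}" using assms by auto
  then show ?thesis using assms by (simp add: image_Un infdist_Un_min)
qed

lemma quasi_geodesic_ray_balanced_point:
  assumes b: "geodesic_ray bp b" and k: "sublinear_fn k" and e: "quasi_geodesic_ray bp q Q e"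
    and near: "e ` {0..} \<subseteq> kappa_nbhd bp k (b ` {0..}) M" and "M \<ge> 0" "s \<ge> 0"
  obtains t where "t \<ge> 0" "infdist (e t) (b ` {0..s}) = infdist (e t) (b ` {s..})"
proof -
  define f where "f t = infdist (e t) (b ` {0..s}) - infdist (e t) (b ` {s..})" for t
  obtain \<rho> where \<rho>: "\<rho> > s" "M * k \<rho> + s < \<rho>"
    using sublinear_fn_eventually_dominated[OF k \<open>M \<ge> 0\<close>] by auto
  obtain T where "T \<ge> 0" and "dist bp (e T) = \<rho>"
    using quasi_geodesic_ray_reaches[OF e, of \<rho>] \<rho> \<open>s \<ge> 0\<close> by auto
  have "\<rho> - s \<le> infdist (e T) (b ` {0..s})"
  proof (rule ccontr)
    assume "\<not> ?thesis"
    then obtain u where "u \<in> {0..s}" "dist (e T) (b u) < \<rho> - s"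
      using infdist_less_imp_ex_dist_less[of "b ` {0..s}" "e T" "\<rho> - s"] \<open>s \<ge> 0\<close> by force
    moreover have "dist bp (e T) \<le> dist bp (b u) + dist (e T) (b u)"
      by (metis dist_commute dist_triangle)
    ultimately show False
      using geodesic_ray_dist[OF b, of u] \<open>dist bp (e T) = \<rho>\<close> by auto
  qed
  moreover have "infdist (e T) (b ` {0..}) \<le> M * k \<rho>"
    using near \<open>T \<ge> 0\<close> \<open>dist bp (e T) = \<rho>\<close> by (force simp: kappa_nbhd_def)
  then have "min (infdist (e T) (b ` {0..s})) (infdist (e T) (b ` {s..})) \<le> M * k \<rho>"
    by (simp add: infdist_image_atLeast_split[OF \<open>s \<ge> 0\<close>])
  ultimately have "f T \<ge> 0" using \<rho> by (auto simp: f_def)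
  moreover have "e 0 \<in> b ` {0..s}"
    using b e \<open>s \<ge> 0\<close> by (force simp: geodesic_ray_def quasi_geodesic_ray_def)
  then have "f 0 \<le> 0" by (simp add: f_def infdist_nonneg)
  moreover have "continuous_on {0..T} f"
    using e unfolding f_def quasi_geodesic_ray_def
    by (intro continuous_intros) (auto elim: continuous_on_subset)
  ultimately obtain t where "t \<in> {0..T}" "f t = 0"
    using IVT'[of f 0 0 T] \<open>T \<ge> 0\<close> by auto
  then show thesis using that[of t] by (simp add: f_def)
qed

lemma CAT0_geodesic_ray_nbhd_of_tracking_ray:
  fixes b :: "real \<Rightarrow> 'a::metric_space"
  assumes cat: "CAT0 TYPE('a)" and b: "geodesic_ray bp b" and k: "sublinear_fn k"
    and e: "quasi_geodesic_ray bp q Q e" and near: "e ` {0..} \<subseteq> kappa_nbhd bp k (b ` {0..}) M"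
  shows "b ` {0..} \<subseteq> kappa_nbhd bp k (e ` {0..}) (2 * M)"
proof clarify
  fix s :: real assume "s \<ge> 0"
  have "e 0 = bp" using e by (simp add: quasi_geodesic_ray_def)
  have near_at: "infdist (e t) (b ` {0..}) \<le> M * k (dist bp (e t))" if "t \<ge> 0" for t
    using near that by (auto simp: kappa_nbhd_def)
  have "0 \<le> M * k 0"
    using near_at[of 0] infdist_nonneg[of bp "b ` {0..}"] by (simp add: \<open>e 0 = bp\<close>)
  then have "M \<ge> 0"
    using sublinear_fn_ge_one[OF k, of 0] by (auto simp: zero_le_mult_iff)
  show "b s \<in> kappa_nbhd bp k (e ` {0..}) (2 * M)"
  proof (cases "s \<le> 2 * M * k s")
    case True
    have "infdist (b s) (e ` {0..}) \<le> dist (b s) (e 0)" by (rule infdist_le) auto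
    then show ?thesis
      using True geodesic_ray_dist[OF b \<open>s \<ge> 0\<close>] \<open>e 0 = bp\<close>
      by (simp add: kappa_nbhd_def dist_commute mult.assoc)
  next
    case False
    have "0 \<le> 2 * M * k s"
      using \<open>M \<ge> 0\<close> sublinear_fn_ge_one[OF k \<open>s \<ge> 0\<close>] by simp
    then have "s > 0" using False by linarith
    obtain t where "t \<ge> 0" and balanced: "infdist (e t) (b ` {0..s}) = infdist (e t) (b ` {s..})"
      using quasi_geodesic_ray_balanced_point[OF b k e near \<open>M \<ge> 0\<close> \<open>s \<ge> 0\<close>] .
    define x where "x = dist bp (e t)"
    have "infdist (e t) (b ` {0..s}) \<le> M * k x" "infdist (e t) (b ` {s..}) \<le> M * k x"
      using near_at[OF \<open>t \<ge> 0\<close>] balanced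
      by (simp_all add: x_def infdist_image_atLeast_split[OF \<open>s \<ge> 0\<close>])
    then have close: "dist (b s) (e t) \<le> M * k x"
      using CAT0_dist_geodesic_ray_le_infdist[OF cat b \<open>s \<ge> 0\<close>] by blast
    have "x \<le> s + M * k x"
      using dist_triangle[of bp "e t" "b s"] close geodesic_ray_dist[OF b \<open>s \<ge> 0\<close>]
      by (simp add: x_def)
    then have "k x \<le> 2 * k s"
      using sublinear_fn_implicit_bound[OF k \<open>M \<ge> 0\<close> \<open>s > 0\<close>] False by (simp add: x_def)
    then have "M * k x \<le> M * (2 * k s)"
      using \<open>M \<ge> 0\<close> by (rule mult_left_mono)
    moreover have "infdist (b s) (e ` {0..}) \<le> dist (b s) (e t)"
      using \<open>t \<ge> 0\<close> by (intro infdist_le) auto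
    ultimately show ?thesis
      using close geodesic_ray_dist[OF b \<open>s \<ge> 0\<close>] by (simp add: kappa_nbhd_def)
  qed
qed

theorem corollary3p12:
  fixes bp :: "'a::metric_space" and k :: "real \<Rightarrow> real" and b :: "real \<Rightarrow> 'a"
    and m :: "real \<Rightarrow> real \<Rightarrow> real"
  assumes "CAT0 TYPE('a)" and "proper_space TYPE('a)"
    and "sublinear_fn k"
    and "geodesic_ray bp b"
    and "kappa_contracting bp k (b ` {0..})"
    and "strongly_morse_fn bp k (b ` {0..}) m"
  shows "\<forall>q Q e. quasi_geodesic_ray bp q Q e \<and> kappa_fellow_travel bp k e b \<longrightarrow>
           e ` {0..} \<subseteq> kappa_nbhd bp k (b ` {0..}) (m q Q) \<and>
           b ` {0..} \<subseteq> kappa_nbhd bp k (e ` {0..}) (2 * m q Q)"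
  \<comment> \<open>Properness and contraction are what produce \<open>m\<close>.\<close>
proof (intro allI impI, elim conjE)
  fix q Q e
  assume e: "quasi_geodesic_ray bp q Q e" and "kappa_fellow_travel bp k e b"
  then obtain n0 where "e ` {0..} \<subseteq> kappa_nbhd bp k (b ` {0..}) n0"
    by (auto simp: kappa_fellow_travel_def)
  then have near: "e ` {0..} \<subseteq> kappa_nbhd bp k (b ` {0..}) (m q Q)"
    by (rule strongly_morse_fn_nbhd_subset[OF assms(3,6) e])
  then show "e ` {0..} \<subseteq> kappa_nbhd bp k (b ` {0..}) (m q Q) \<and>
      b ` {0..} \<subseteq> kappa_nbhd bp k (e ` {0..}) (2 * m q Q)"
    using CAT0_geodesic_ray_nbhd_of_tracking_ray[OF assms(1,4,3) e near] by simp
qed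

end
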